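(* Let $(M,\mathcal{H},\langle\cdot,\cdot\rangle)$ be a quaternionic contact manifold of dimension $4n+3$, locally $\mathcal{H}=\bigcap_{i=1}^3\ker\eta_i$ with associated almost complex structures $I_1,I_2,I_3$ and Reeb vector fields $V_1,V_2,V_3$. Let $\{X_1,\dots,X_{4n},V_1,V_2,V_3\}$ be a local orthonormal frame (for the Riemannian metric $g$) near a point such that $\{X_1,\dots,X_{4n}\}$ is an $Sp(n)Sp(1)$-frame, and let $\{\theta_1,\dots,\theta_{4n},\eta_1,\eta_2,\eta_3\}$ be its dual coframe. Then the Popp measure $\mathcal{P}$ of the subriemannian manifold $(M,\mathcal{H},\langle\cdot,\cdot\rangle)$ is $$\mathcal{P}=\frac{1}{(16n)^{3/2}}\,\theta_1\wedge\cdots\wedge\theta_{4n}\wedge\eta_1\wedge\eta_2\wedge\eta_3 .$$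
   Context: A quaternionic contact (qc) manifold $(M,\mathcal{H},\langle\cdot,\cdot\rangle)$ is a connected orientable manifold of dimension $4n+3$ with a corank-3 distribution $\mathcal{H}$ and a smooth fiberwise inner product $\langle\cdot,\cdot\rangle$ on $\mathcal{H}$ such that locally $\mathcal{H}=\bigcap_{i=1}^3\ker\eta_i$ for 1-forms $\eta_1,\eta_2,\eta_3$, and there are almost complex structures $I_1,I_2,I_3$ on $\mathcal{H}$ with $I_i^2=I_1I_2I_3=-\mathrm{Id}$ and $2\langle I_iX,Y\rangle=d\eta_i(X,Y)$ for horizontal $X,Y$. The Reeb vector fields $V_1,V_2,V_3$ are defined by $\eta_i(V_j)=\delta_{ij}$ and $(V_i\lrcorner d\eta_j)|_{\mathcal{H}}=-(V_j\lrcorner d\eta_i)|_{\mathcal{H}}$ (for $n=1$ their existence is assumed). The Riemannian metric $g$ extends $\langle\cdot,\cdot\rangle$ by $g=\langle\cdot,\cdot\rangle\oplus(\eta_1^2+\eta_2^2+\eta_3^2)$, with $\mathcal{H}\perp\mathrm{span}\{V_i\}$. An $Sp(n)Sp(1)$-frame is an orthonormal frame $\{X_1,\dots,X_{4n}\}$ of $\mathcal{H}$ with $I_iX_{4k+1}=X_{4k+i+1}$ for $k=0,\dots,n-1$, $i=1,2,3$. The Popp measure of a regular step-two subriemannian manifold, expressed in a local frame $\{X_1,\dots,X_{4n},V_1,V_2,V_3\}$ with $X_\alpha$ orthonormal in $\mathcal{H}$ and dual coframe $\{\theta_\alpha,\eta_i\}$, is $\frac{1}{\sqrt{\det B}}\theta_1\wedge\cdots\wedge\theta_{4n}\wedge\eta_1\wedge\eta_2\wedge\eta_3$,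 where $B_{ij}=\sum_{\alpha,\beta}b^i_{\alpha\beta}b^j_{\alpha\beta}$ and $b^i_{\alpha\beta}=\eta_i([X_\alpha,X_\beta])$. *)

theory Defs
  imports "HOL-Analysis.Analysis"
begin

text \<open>Local model: an open set U of a euclidean space of dimension 4n+3 (a chart).
  Vector fields are maps 'a => 'a; a 1-form eta is represented by its Riesz vector field,
  i.e. eta_p(v) = eta p \<bullet> v.\<close>

definition lie_bracket :: "('a::euclidean_space \<Rightarrow> 'a) \<Rightarrow> ('a \<Rightarrow> 'a) \<Rightarrow> 'a \<Rightarrow> 'a" where
  "lie_bracket X Y p = frechet_derivative Y (at p) (X p) - frechet_derivative X (at p) (Y p)"

text \<open>Exterior derivative of a 1-form at p, convention
  d eta (X,Y) = X(eta Y) - Y(eta X) - eta([X,Y]).\<close>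
definition d1form :: "('a::euclidean_space \<Rightarrow> 'a) \<Rightarrow> 'a \<Rightarrow> 'a \<Rightarrow> 'a \<Rightarrow> real" where
  "d1form \<omega> p u v = frechet_derivative \<omega> (at p) u \<bullet> v - frechet_derivative \<omega> (at p) v \<bullet> u"

definition horiz :: "(nat \<Rightarrow> 'a::euclidean_space \<Rightarrow> 'a) \<Rightarrow> 'a \<Rightarrow> 'a set" where
  "horiz \<eta> p = {v. \<forall>i\<in>{1,2,3}. \<eta> i p \<bullet> v = 0}"

definition det_nat :: "nat \<Rightarrow> (nat \<Rightarrow> nat \<Rightarrow> real) \<Rightarrow> real" where
  "det_nat m A = (\<Sum>\<sigma> | \<sigma> permutes {1..m}. of_int (sign \<sigma>) * (\<Prod>i\<in>{1..m}. A i (\<sigma> i)))"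

definition qc_structure ::
  "nat \<Rightarrow> 'a::euclidean_space set \<Rightarrow> (nat \<Rightarrow> 'a \<Rightarrow> 'a) \<Rightarrow> ('a \<Rightarrow> 'a \<Rightarrow> 'a \<Rightarrow> real)
    \<Rightarrow> (nat \<Rightarrow> 'a \<Rightarrow> 'a \<Rightarrow> 'a) \<Rightarrow> (nat \<Rightarrow> 'a \<Rightarrow> 'a) \<Rightarrow> bool" where
  "qc_structure n U \<eta> g I V \<longleftrightarrow>
     n \<ge> 1 \<and> DIM('a) = 4 * n + 3 \<and> open U \<and>
     (\<forall>i\<in>{1,2,3}. \<eta> i differentiable_on U) \<and>
     (\<forall>p\<in>U.
        \<comment> \<open>corank 3: the eta_i are linearly independent\<close>
        independent {\<eta> 1 p, \<eta> 2 p, \<eta> 3 p} \<and> card {\<eta> 1 p, \<eta> 2 p, \<eta> 3 p} = 3 \<and>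
        \<comment> \<open>fiberwise inner product on H_p\<close>
        (\<forall>u\<in>horiz \<eta> p. \<forall>v\<in>horiz \<eta> p. g p u v = g p v u) \<and>
        (\<forall>u\<in>horiz \<eta> p. \<forall>v\<in>horiz \<eta> p. \<forall>w\<in>horiz \<eta> p.
            g p (u + v) w = g p u w + g p v w) \<and>
        (\<forall>u\<in>horiz \<eta> p. \<forall>w\<in>horiz \<eta> p. \<forall>c. g p (c *\<^sub>R u) w = c * g p u w) \<and>
        (\<forall>u\<in>horiz \<eta> p. u \<noteq> 0 \<longrightarrow> g p u u > 0) \<and>
        \<comment> \<open>almost complex structures on H_p\<close>
        (\<forall>i\<in>{1,2,3}. \<forall>u\<in>horiz \<eta> p. I i p u \<in> horiz \<eta> p) \<and>
        (\<forall>i\<in>{1,2,3}. \<forall>u\<in>horiz \<eta> p. \<forall>v\<in>horiz \<eta> p. \<forall>c.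
            I i p (u + v) = I i p u + I i p v \<and> I i p (c *\<^sub>R u) = c *\<^sub>R I i p u) \<and>
        (\<forall>i\<in>{1,2,3}. \<forall>u\<in>horiz \<eta> p. I i p (I i p u) = - u) \<and>
        (\<forall>u\<in>horiz \<eta> p. I 1 p (I 2 p (I 3 p u)) = - u) \<and>
        (\<forall>i\<in>{1,2,3}. \<forall>u\<in>horiz \<eta> p. \<forall>v\<in>horiz \<eta> p.
            2 * g p (I i p u) v = d1form (\<eta> i) p u v) \<and>
        \<comment> \<open>Reeb vector fields\<close>
        (\<forall>i\<in>{1,2,3}. \<forall>j\<in>{1,2,3}. \<eta> i p \<bullet> V j p = (if i = j then 1 else 0)) \<and>
        (\<forall>i\<in>{1,2,3}. \<forall>j\<in>{1,2,3}. \<forall>u\<in>horiz \<eta> p.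
            d1form (\<eta> j) p (V i p) u = - d1form (\<eta> i) p (V j p) u))"

definition spn_sp1_frame ::
  "nat \<Rightarrow> 'a::euclidean_space set \<Rightarrow> (nat \<Rightarrow> 'a \<Rightarrow> 'a) \<Rightarrow> ('a \<Rightarrow> 'a \<Rightarrow> 'a \<Rightarrow> real)
    \<Rightarrow> (nat \<Rightarrow> 'a \<Rightarrow> 'a \<Rightarrow> 'a) \<Rightarrow> (nat \<Rightarrow> 'a \<Rightarrow> 'a) \<Rightarrow> bool" where
  "spn_sp1_frame n U \<eta> g I X \<longleftrightarrow>
     (\<forall>\<alpha>\<in>{1..4*n}. X \<alpha> differentiable_on U) \<and>
     (\<forall>p\<in>U.
        (\<forall>\<alpha>\<in>{1..4*n}. X \<alpha> p \<in> horiz \<eta> p) \<and>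
        (\<forall>\<alpha>\<in>{1..4*n}. \<forall>\<beta>\<in>{1..4*n}. g p (X \<alpha> p) (X \<beta> p) = (if \<alpha> = \<beta> then 1 else 0)) \<and>
        (\<forall>k<n. \<forall>i\<in>{1,2,3}. I i p (X (4*k+1) p) = X (4*k+i+1) p))"

text \<open>Popp measure: coefficient of theta_1 ^ ... ^ theta_4n ^ eta_1 ^ eta_2 ^ eta_3,
  namely 1/sqrt(det B), B_ij = sum b^i_ab b^j_ab, b^i_ab = eta_i([X_a, X_b]).\<close>
definition popp_b :: "(nat \<Rightarrow> 'a::euclidean_space \<Rightarrow> 'a) \<Rightarrow> (nat \<Rightarrow> 'a \<Rightarrow> 'a) \<Rightarrow> 'a \<Rightarrow> nat \<Rightarrow> nat \<Rightarrow> nat \<Rightarrow> real" where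
  "popp_b \<eta> X p i \<alpha> \<beta> = \<eta> i p \<bullet> lie_bracket (X \<alpha>) (X \<beta>) p"

definition popp_B :: "nat \<Rightarrow> (nat \<Rightarrow> 'a::euclidean_space \<Rightarrow> 'a) \<Rightarrow> (nat \<Rightarrow> 'a \<Rightarrow> 'a) \<Rightarrow> 'a \<Rightarrow> nat \<Rightarrow> nat \<Rightarrow> real" where
  "popp_B n \<eta> X p i j = (\<Sum>\<alpha>\<in>{1..4*n}. \<Sum>\<beta>\<in>{1..4*n}. popp_b \<eta> X p i \<alpha> \<beta> * popp_b \<eta> X p j \<alpha> \<beta>)"

definition popp_coeff :: "nat \<Rightarrow> (nat \<Rightarrow> 'a::euclidean_space \<Rightarrow> 'a) \<Rightarrow> (nat \<Rightarrow> 'a \<Rightarrow> 'a) \<Rightarrow> 'a \<Rightarrow> real" where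
  "popp_coeff n \<eta> X p = 1 / sqrt (det_nat 3 (popp_B n \<eta> X p))"

end

theory Submission
  imports Defs
begin

(* For horizontal vector fields X, Y one has eta_i([X, Y]) = - d eta_i(X, Y) = - 2 g(I_i X, Y),
   so b^i_ab = - 2 g(I_i X_a, X_b).  Parseval's identity in the orthonormal frame X_1..X_4n turns
   B_ij into 4 (sum over a of g(I_i X_a, I_j X_a)), and since I_1, I_2, I_3 are g-skew complex
   structures satisfying the quaternion relations, g(I_i u, I_j u) = delta_ij g(u, u).  Hence
   B = 16n Id and det B = (16n)^3. *)

lemma frechet_derivative_inner_vanishing:
  fixes \<omega> Y :: "'a::euclidean_space \<Rightarrow> 'a"
  assumes "open U" "p \<in> U" "\<omega> differentiable at p" "Y differentiable at p"
    and "\<forall>q\<in>U. \<omega> q \<bullet> Y q = 0"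
  shows "frechet_derivative \<omega> (at p) h \<bullet> Y p + \<omega> p \<bullet> frechet_derivative Y (at p) h = 0"
proof -
  have product_rule: "((\<lambda>q. \<omega> q \<bullet> Y q) has_derivative
      (\<lambda>h. \<omega> p \<bullet> frechet_derivative Y (at p) h + frechet_derivative \<omega> (at p) h \<bullet> Y p)) (at p)"
    using assms(3,4) unfolding frechet_derivative_works by (intro has_derivative_inner)
  have "((\<lambda>q. \<omega> q \<bullet> Y q) has_derivative (\<lambda>h. 0)) (at p)"
    by (rule has_derivative_transform_within_open[OF _ assms(1,2)]) (use assms(5) in auto)
  from has_derivative_unique[OF product_rule this] show ?thesis
    by (metis add.commute)
qed

lemma inner_lie_bracket_eq_neg_d1form:
  fixes \<omega> X Y :: "'a::euclidean_space \<Rightarrow> 'a"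
  assumes "open U" "p \<in> U"
    and "\<omega> differentiable at p" "X differentiable at p" "Y differentiable at p"
    and "\<forall>q\<in>U. \<omega> q \<bullet> X q = 0" "\<forall>q\<in>U. \<omega> q \<bullet> Y q = 0"
  shows "\<omega> p \<bullet> lie_bracket X Y p = - d1form \<omega> p (X p) (Y p)"
  using frechet_derivative_inner_vanishing[OF assms(1-3,5,7), of "X p"]
    frechet_derivative_inner_vanishing[OF assms(1-4,6), of "Y p"]
  unfolding lie_bracket_def d1form_def by (simp add: inner_diff_right)

lemma d1form_swap: "d1form \<omega> p v u = - d1form \<omega> p u v"
  unfolding d1form_def by (simp add: inner_commute)

lemma horiz_subspace: "subspace (horiz \<eta> p)"
  unfolding horiz_def subspace_def by (simp add: inner_add_right)

lemma horiz_eq_orthogonal_span: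
  "horiz \<eta> p = {v. \<forall>w \<in> span {\<eta> 1 p, \<eta> 2 p, \<eta> 3 p}. orthogonal w v}"
proof safe
  fix v w assume "v \<in> horiz \<eta> p" "w \<in> span {\<eta> 1 p, \<eta> 2 p, \<eta> 3 p}"
  moreover have "orthogonal v z" if "z \<in> {\<eta> 1 p, \<eta> 2 p, \<eta> 3 p}" for z
    using \<open>v \<in> horiz \<eta> p\<close> that unfolding horiz_def orthogonal_def by (auto simp: inner_commute)
  ultimately show "orthogonal w v"
    by (metis orthogonal_commute orthogonal_to_span)
next
  fix v assume "\<forall>w \<in> span {\<eta> 1 p, \<eta> 2 p, \<eta> 3 p}. orthogonal w v"
  then show "v \<in> horiz \<eta> p"
    unfolding horiz_def orthogonal_def by (auto intro: span_base)
qed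

lemma dim_horiz:
  fixes \<eta> :: "nat \<Rightarrow> 'a::euclidean_space \<Rightarrow> 'a"
  assumes "independent {\<eta> 1 p, \<eta> 2 p, \<eta> 3 p}" "card {\<eta> 1 p, \<eta> 2 p, \<eta> 3 p} = 3"
  shows "dim (horiz \<eta> p) + 3 = DIM('a)"
proof -
  have "dim (span {\<eta> 1 p, \<eta> 2 p, \<eta> 3 p}) = 3"
    using assms dim_span_eq_card_independent by metis
  then show ?thesis
    using dim_subspace_orthogonal_to_vectors[of "span {\<eta> 1 p, \<eta> 2 p, \<eta> 3 p}" UNIV]
    by (simp add: horiz_eq_orthogonal_span)
qed

lemma det_nat_diagonal:
  assumes "\<forall>i\<in>{1..m}. \<forall>j\<in>{1..m}. A i j = (if i = j then c else 0)"
  shows "det_nat m A = c ^ m"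
proof -
  have "of_int (sign \<sigma>) * (\<Prod>i\<in>{1..m}. A i (\<sigma> i)) = (if \<sigma> = id then c ^ m else 0)"
    if \<sigma>: "\<sigma> permutes {1..m}" for \<sigma>
  proof (cases "\<sigma> = id")
    case True
    then show ?thesis using assms by (simp add: sign_id)
  next
    case False
    then obtain i where i: "\<sigma> i \<noteq> i" by (metis eq_id_iff)
    then have "i \<in> {1..m}" "\<sigma> i \<in> {1..m}"
      using \<sigma> by (auto simp: permutes_def permutes_in_image)
    then have "A i (\<sigma> i) = 0" using assms i by simp
    then have "(\<Prod>i\<in>{1..m}. A i (\<sigma> i)) = 0"
      using \<open>i \<in> {1..m}\<close> by (intro prod_zero) auto
    then show ?thesis using False by simp
  qed
  then have "det_nat m A = (\<Sum>\<sigma> | \<sigma> permutes {1..m}. if \<sigma> = id then c ^ m else 0)"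
    unfolding det_nat_def by (intro sum.cong) auto
  also have "\<dots> = c ^ m"
    using finite_permutations[of "{1..m}"] permutes_id[of "{1..m}"] by (simp add: sum.delta')
  finally show ?thesis .
qed

lemma sqrt_power3_eq_powr:
  assumes "(x::real) > 0"
  shows "sqrt (x ^ 3) = x powr (3/2)"
proof -
  have "sqrt (x ^ 3) = (x powr 3) powr (1/2)"
    using assms by (simp add: powr_half_sqrt powr_realpow)
  also have "\<dots> = x powr (3/2)" by (simp add: powr_powr)
  finally show ?thesis .
qed

locale symmetric_form =
  fixes H :: "'a::euclidean_space set" and G :: "'a \<Rightarrow> 'a \<Rightarrow> real"
  assumes subspace: "subspace H"
    and sym: "\<And>u v. u \<in> H \<Longrightarrow> v \<in> H \<Longrightarrow> G u v = G v u"
    and add_left: "\<And>u v w. u \<in> H \<Longrightarrow> v \<in> H \<Longrightarrow> w \<in> H \<Longrightarrow> G (u + v) w = G u w + G v w"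
    and scale_left: "\<And>u w c. u \<in> H \<Longrightarrow> w \<in> H \<Longrightarrow> G (c *\<^sub>R u) w = c * G u w"
begin

lemma zero_left: "w \<in> H \<Longrightarrow> G 0 w = 0"
  using scale_left[of 0 w 0] subspace by (simp add: subspace_0)

lemma minus_left: "u \<in> H \<Longrightarrow> v \<in> H \<Longrightarrow> G (- u) v = - G u v"
  using scale_left[of u v "-1"] by simp

lemma sum_left:
  assumes "finite A" "\<And>a. a \<in> A \<Longrightarrow> y a \<in> H" "w \<in> H"
  shows "G (\<Sum>a\<in>A. c a *\<^sub>R y a) w = (\<Sum>a\<in>A. c a * G (y a) w)"
  using assms
proof (induction A rule: finite_induct)
  case empty
  then show ?case using zero_left by simp
next
  case (insert a A)
  have "(\<Sum>a\<in>A. c a *\<^sub>R y a) \<in> H" "c a *\<^sub>R y a \<in> H"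
    using insert.prems subspace by (auto intro: subspace_sum subspace_scale)
  then show ?case using insert by (simp add: add_left scale_left)
qed

end

locale orthonormal_frame = symmetric_form +
  fixes x :: "nat \<Rightarrow> 'a::euclidean_space" and m :: nat
  assumes dim: "dim H = m"
    and frame_in: "\<And>a. a \<in> {1..m} \<Longrightarrow> x a \<in> H"
    and orthonormal:
      "\<And>a b. a \<in> {1..m} \<Longrightarrow> b \<in> {1..m} \<Longrightarrow> G (x a) (x b) = (if a = b then 1 else 0)"
begin

lemma inj_on_frame: "inj_on x {1..m}"
  using orthonormal by (intro inj_onI) (metis zero_neq_one)

lemma coefficient:
  assumes "b \<in> {1..m}"
  shows "G (\<Sum>a\<in>{1..m}. c a *\<^sub>R x a) (x b) = c b"
proof -
  have "G (\<Sum>a\<in>{1..m}. c a *\<^sub>R x a) (x b) = (\<Sum>a\<in>{1..m}. c a * G (x a) (x b))"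
    by (rule sum_left) (use assms frame_in in auto)
  also have "\<dots> = (\<Sum>a\<in>{1..m}. if a = b then c a else 0)"
    using assms orthonormal by (intro sum.cong) auto
  also have "\<dots> = c b" using assms by simp
  finally show ?thesis .
qed

lemma sum_frame_reindex: "(\<Sum>v\<in>x ` {1..m}. c v *\<^sub>R v) = (\<Sum>a\<in>{1..m}. c (x a) *\<^sub>R x a)"
  using sum.reindex[OF inj_on_frame, of "\<lambda>v. c v *\<^sub>R v"] by (simp add: o_def)

lemma independent_frame: "independent (x ` {1..m})"
  unfolding independent_explicit
proof (intro conjI allI impI ballI)
  fix c v assume "(\<Sum>v\<in>x ` {1..m}. c v *\<^sub>R v) = 0" and "v \<in> x ` {1..m}"
  then obtain b where b: "b \<in> {1..m}" "v = x b"
    and "(\<Sum>a\<in>{1..m}. c (x a) *\<^sub>R x a) = 0"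
    by (auto simp only: sum_frame_reindex)
  then show "c v = 0"
    using coefficient[OF b(1), of "\<lambda>a. c (x a)"] zero_left frame_in by simp
qed simp

lemma span_frame: "H \<subseteq> span (x ` {1..m})"
proof -
  have "x ` {1..m} \<subseteq> H" using frame_in by auto
  moreover have "card (x ` {1..m}) = dim H" using dim card_image[OF inj_on_frame] by simp
  ultimately show ?thesis using card_eq_dim independent_frame by blast
qed

lemma parseval:
  assumes "u \<in> H" "v \<in> H"
  shows "G u v = (\<Sum>b\<in>{1..m}. G u (x b) * G v (x b))"
proof -
  have "u \<in> span (x ` {1..m})" using span_frame assms(1) by auto
  then obtain c where "u = (\<Sum>v\<in>x ` {1..m}. c v *\<^sub>R v)"
    by (auto simp: span_finite)
  then have u: "u = (\<Sum>a\<in>{1..m}. c (x a) *\<^sub>R x a)"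
    by (simp only: sum_frame_reindex)
  have "G u v = (\<Sum>a\<in>{1..m}. c (x a) * G (x a) v)"
    unfolding u by (rule sum_left) (use assms frame_in in auto)
  also have "\<dots> = (\<Sum>b\<in>{1..m}. G u (x b) * G v (x b))"
    using u coefficient[of _ "\<lambda>a. c (x a)"] sym assms frame_in by (intro sum.cong) auto
  finally show ?thesis .
qed

end

locale quaternionic_form = symmetric_form +
  fixes J :: "nat \<Rightarrow> 'a::euclidean_space \<Rightarrow> 'a"
  assumes J_in: "\<And>i u. i \<in> {1,2,3} \<Longrightarrow> u \<in> H \<Longrightarrow> J i u \<in> H"
    and J_scale: "\<And>i u c. i \<in> {1,2,3} \<Longrightarrow> u \<in> H \<Longrightarrow> J i (c *\<^sub>R u) = c *\<^sub>R J i u"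
    and J_J: "\<And>i u. i \<in> {1,2,3} \<Longrightarrow> u \<in> H \<Longrightarrow> J i (J i u) = - u"
    and J1_J2_J3: "\<And>u. u \<in> H \<Longrightarrow> J 1 (J 2 (J 3 u)) = - u"
    and J_skew: "\<And>i u v. i \<in> {1,2,3} \<Longrightarrow> u \<in> H \<Longrightarrow> v \<in> H \<Longrightarrow> G (J i u) v = - G (J i v) u"
begin

lemma J_minus: "i \<in> {1,2,3} \<Longrightarrow> u \<in> H \<Longrightarrow> J i (- u) = - J i u"
  using J_scale[of i u "-1"] by simp

lemma J1_J2: assumes "u \<in> H" shows "J 1 (J 2 u) = J 3 u"
proof -
  have "- J 3 u = J 1 (J 2 (J 3 (J 3 u)))" using J1_J2_J3 J_in assms by simp
  also have "\<dots> = - J 1 (J 2 u)" using J_J J_minus J_in assms by simp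
  finally show ?thesis by simp
qed

lemma J1_J3:
  assumes "u \<in> H" shows "J 1 (J 3 u) = - J 2 u"
proof -
  have "J 1 (J 3 u) = J 1 (J 1 (J 2 u))" using J1_J2[OF assms] by simp
  also have "\<dots> = - J 2 u" using J_J J_in assms by simp
  finally show ?thesis .
qed

lemma J3_J2:
  assumes "u \<in> H" shows "J 3 (J 2 u) = - J 1 u"
proof -
  have "J 3 (J 2 u) = J 1 (J 2 (J 2 u))" using J1_J2 J_in assms by simp
  also have "\<dots> = - J 1 u" using J_J J_minus assms by simp
  finally show ?thesis .
qed

lemma J_self: "i \<in> {1,2,3} \<Longrightarrow> u \<in> H \<Longrightarrow> G (J i u) u = 0"
  using J_skew[of i u u] by simp

lemma J_J_orthogonal:
  assumes "i \<in> {1,2,3}" "j \<in> {1,2,3}" "u \<in> H"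
  shows "G (J i u) (J j u) = (if i = j then G u u else 0)"
proof -
  have skew: "G (J i u) (J j u) = - G (J i (J j u)) u" if "i \<in> {1,2,3}" "j \<in> {1,2,3}" for i j
    using J_skew[of i u "J j u"] J_in that assms by simp
  have swap: "G (J i u) (J j u) = G (J j u) (J i u)" if "i \<in> {1,2,3}" "j \<in> {1,2,3}" for i j
    using sym J_in that assms by simp
  have "G (J 1 u) (J 2 u) = 0"
    using skew[of 1 2] J1_J2 J_self assms by simp
  moreover have "G (J 1 u) (J 3 u) = 0"
    using skew[of 1 3] J1_J3 J_self minus_left J_in assms by simp
  moreover have "G (J 3 u) (J 2 u) = 0"
    using skew[of 3 2] J3_J2 J_self minus_left J_in assms by simp
  moreover have "G (J i u) (J i u) = G u u"
    using skew[of i i] J_J minus_left assms by simp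
  ultimately show ?thesis
    using assms(1,2) swap[of 2 1] swap[of 3 1] swap[of 2 3] by auto
qed

end

locale quaternionic_frame = orthonormal_frame H G x m + quaternionic_form H G J
  for H G x m J
begin

lemma sum_products_J_frame:
  assumes "i \<in> {1,2,3}" "j \<in> {1,2,3}"
  shows "(\<Sum>a\<in>{1..m}. \<Sum>b\<in>{1..m}. G (J i (x a)) (x b) * G (J j (x a)) (x b))
     = (if i = j then real m else 0)"
proof -
  have "(\<Sum>b\<in>{1..m}. G (J i (x a)) (x b) * G (J j (x a)) (x b)) = (if i = j then 1 else 0)"
    if "a \<in> {1..m}" for a
    using parseval[of "J i (x a)" "J j (x a)"] J_J_orthogonal[of i j "x a"]
      J_in frame_in orthonormal that assms by simp
  then show ?thesis by simp
qed

end

lemma qc_quaternionic_frame: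
  assumes qc: "qc_structure n U \<eta> g I V" and frame: "spn_sp1_frame n U \<eta> g I X" and "p \<in> U"
  shows "quaternionic_frame (horiz \<eta> p) (g p) (\<lambda>a. X a p) (4 * n) (\<lambda>i. I i p)"
proof -
  note qc_at_p = qc[unfolded qc_structure_def, THEN conjunct2, THEN conjunct2, THEN conjunct2,
      THEN conjunct2, rule_format, OF \<open>p \<in> U\<close>]
  show ?thesis
  proof unfold_locales
    show "dim (horiz \<eta> p) = 4 * n"
      using qc_at_p dim_horiz[of \<eta> p] qc by (simp add: qc_structure_def)
    show "g p (I i p u) v = - g p (I i p v) u"
      if "i \<in> {1,2,3}" "u \<in> horiz \<eta> p" "v \<in> horiz \<eta> p" for i u v
      using qc_at_p that d1form_swap[of "\<eta> i" p u v] by (smt (verit))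
  qed (use qc_at_p frame \<open>p \<in> U\<close> horiz_subspace in \<open>auto simp: spn_sp1_frame_def\<close>)
qed

lemma popp_b_eq_fundamental_form:
  assumes qc: "qc_structure n U \<eta> g I V" and frame: "spn_sp1_frame n U \<eta> g I X" and "p \<in> U"
    and "i \<in> {1,2,3}" "a \<in> {1..4*n}" "b \<in> {1..4*n}"
  shows "popp_b \<eta> X p i a b = - 2 * g p (I i p (X a p)) (X b p)"
proof -
  have "open U" and "\<forall>i\<in>{1,2,3}. \<eta> i differentiable_on U"
    and fundamental_form: "\<forall>u\<in>horiz \<eta> p. \<forall>v\<in>horiz \<eta> p. 2 * g p (I i p u) v = d1form (\<eta> i) p u v"
    using qc \<open>p \<in> U\<close> \<open>i \<in> {1,2,3}\<close> unfolding qc_structure_def by blast+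
  moreover have "\<forall>\<alpha>\<in>{1..4*n}. X \<alpha> differentiable_on U"
    and "X a p \<in> horiz \<eta> p" "X b p \<in> horiz \<eta> p"
    using frame \<open>p \<in> U\<close> assms(5,6) unfolding spn_sp1_frame_def by blast+
  ultimately have differentiable:
    "\<eta> i differentiable at p" "X a differentiable at p" "X b differentiable at p"
    using assms(3-6) differentiable_on_eq_differentiable_at by blast+
  have horizontal: "\<forall>q\<in>U. \<eta> i q \<bullet> X c q = 0" if "c \<in> {1..4*n}" for c
    using frame that \<open>i \<in> {1,2,3}\<close> by (auto simp: spn_sp1_frame_def horiz_def)
  have "popp_b \<eta> X p i a b = - d1form (\<eta> i) p (X a p) (X b p)"
    unfolding popp_b_def
    by (rule inner_lie_bracket_eq_neg_d1form[OF \<open>open U\<close> \<open>p \<in> U\<close> differentiable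
          horizontal[OF \<open>a \<in> _\<close>] horizontal[OF \<open>b \<in> _\<close>]])
  also have "\<dots> = - 2 * g p (I i p (X a p)) (X b p)"
    using fundamental_form \<open>X a p \<in> horiz \<eta> p\<close> \<open>X b p \<in> horiz \<eta> p\<close> by simp
  finally show ?thesis .
qed

lemma popp_B_eq_diagonal:
  assumes qc: "qc_structure n U \<eta> g I V" and frame: "spn_sp1_frame n U \<eta> g I X" and "p \<in> U"
    and "i \<in> {1..3}" "j \<in> {1..3}"
  shows "popp_B n \<eta> X p i j = (if i = j then 16 * real n else 0)"
proof -
  interpret quaternionic_frame "horiz \<eta> p" "g p" "\<lambda>a. X a p" "4 * n" "\<lambda>i. I i p"
    using qc_quaternionic_frame[OF qc frame \<open>p \<in> U\<close>] .
  have ij: "i \<in> {1,2,3}" "j \<in> {1,2,3}" using assms(4,5) by auto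
  have "popp_b \<eta> X p i a b * popp_b \<eta> X p j a b
      = 4 * (g p (I i p (X a p)) (X b p) * g p (I j p (X a p)) (X b p))"
    if "a \<in> {1..4*n}" "b \<in> {1..4*n}" for a b
    using popp_b_eq_fundamental_form[OF qc frame \<open>p \<in> U\<close> ij(1) that]
      popp_b_eq_fundamental_form[OF qc frame \<open>p \<in> U\<close> ij(2) that] by simp
  then have "popp_B n \<eta> X p i j = 4 * (\<Sum>a\<in>{1..4*n}. \<Sum>b\<in>{1..4*n}.
      g p (I i p (X a p)) (X b p) * g p (I j p (X a p)) (X b p))"
    unfolding popp_B_def sum_distrib_left by (intro sum.cong refl) auto
  then show ?thesis using sum_products_J_frame[OF ij] by simp
qed

theorem lemma4p1:
  fixes U :: "'a::euclidean_space set"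
    and \<eta> V :: "nat \<Rightarrow> 'a \<Rightarrow> 'a"
    and g :: "'a \<Rightarrow> 'a \<Rightarrow> 'a \<Rightarrow> real"
    and I :: "nat \<Rightarrow> 'a \<Rightarrow> 'a \<Rightarrow> 'a"
    and X :: "nat \<Rightarrow> 'a \<Rightarrow> 'a"
    and n :: nat
  assumes "qc_structure n U \<eta> g I V"
    and "spn_sp1_frame n U \<eta> g I X"
  shows "\<forall>p\<in>U. popp_coeff n \<eta> X p = 1 / (16 * real n) powr (3/2)"
proof
  fix p assume "p \<in> U"
  have "det_nat 3 (popp_B n \<eta> X p) = (16 * real n) ^ 3"
    using popp_B_eq_diagonal[OF assms \<open>p \<in> U\<close>] by (intro det_nat_diagonal) simp
  moreover have "n \<ge> 1" using assms(1) unfolding qc_structure_def by blast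
  then have "sqrt ((16 * real n) ^ 3) = (16 * real n) powr (3/2)"
    by (intro sqrt_power3_eq_powr) simp
  ultimately show "popp_coeff n \<eta> X p = 1 / (16 * real n) powr (3/2)"
    unfolding popp_coeff_def by (simp only:)
qed

end
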